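(* Let $T$ be a left-linear term rewriting system and $\psi$ a convergent proof term for $T$. Then (a) $tgt(\psi)$ is defined; and (b) for every $n<\omega$, if $mind(\psi)>n$ then $d(src(\psi),tgt(\psi))<2^{-n}$.
   Context: Setting. $T=(\Sigma,R)$: $\Sigma$ finite; rules $\mu: l\to r$ with $l$ finite, non-variable, linear, variables of $r$ among those of $l$; $r$ may be infinite. Terms are finite or infinite trees; $d(t,u)=0$ if $t=u$ and $2^{-k}$ otherwise, $k$ the least length of a position where $t$ and $u$ differ; limits are w.r.t. $d$. Multisteps. $\Sigma^R$ is $\Sigma$ plus a symbol $\mu$ of arity $n$ for each rule $\mu: l[x_1,..,x_n]\to r[x_1,..,x_n]$. A multistep is a closed finite or infinite term over $\Sigma^R$; $src$ = its normal form under $\mu(\vec x)\to l[\vec x]$, $tgt$ = its normal form (if any, via strongly convergent reduction) under $\mu(\vec x)\to r[\vec x]$; convergent iff $tgt$ defined; $mind=\omega$ if no rule symbol, else the least depth of a rule-symbol occurrence. Proof terms (over $\Sigma^R\cup\{\cdot/2\}$) with partial $src,tgt$, convergence and $mind$: the least set closed under (i) multisteps; (ii) $\psi_1\cdot\psi_2$ for $\psi_1$ convergent, $tgt(\psi_1)=src(\psi_2)$: $src=src(\psi_1)$, $tgt=tgt(\psi_2)$, convergent iff $\psi_2$ is, $mind=\min$; (iii) $\prod_{i<\omega}\psi_i=\psi_0\cdot(\psi_1\cdot\cdots)$ for convergent $\psi_i$ with $tgt(\psi_i)=src(\psi_{i+1})$: $src=src(\psi_0)$, $tgt=\lim_i tgt(\psi_i)$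 (undefined if no limit), $mind=\min_i mind(\psi_i)$, convergent iff for every $k$ there is $n$ with $mind(\psi_j)>k$ for $j>n$; (iv) $f(\psi_1,..,\psi_m)$, $f\in\Sigma$: $src,tgt$ componentwise, convergent iff all $\psi_i$ are, $mind=1+\min$; (v) $\mu(\psi_1,..,\psi_n)$: $src=l[src(\psi_1),..]$, $tgt=r[tgt(\psi_1),..]$, convergent iff $\psi_i$ convergent whenever $x_i$ occurs in $r$, $mind=0$. *)

theory Defs
  imports Complex_Main "HOL-Library.Extended_Nat"
begin

text \<open>A (finite or infinite) term is represented by its labelling function on positions
  (lists of argument indices, 0-based); positions outside the term are mapped to None.\<close>

type_synonym 'a tree = "nat list \<Rightarrow> 'a option"

definition wf_tree :: "('a \<Rightarrow> nat) \<Rightarrow> 'a tree \<Rightarrow> bool" where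
  "wf_tree ar t \<longleftrightarrow> t [] \<noteq> None
     \<and> (\<forall>p a. t p = Some a \<longrightarrow> (\<forall>i. t (p @ [i]) \<noteq> None \<longleftrightarrow> i < ar a))
     \<and> (\<forall>p i. t (p @ [i]) \<noteq> None \<longrightarrow> t p \<noteq> None)"

definition tdist :: "'a tree \<Rightarrow> 'a tree \<Rightarrow> real" where
  "tdist t u = (if t = u then 0
     else (1/2) ^ (LEAST k. \<exists>p. length p = k \<and> t p \<noteq> u p))"

definition subtree :: "'a tree \<Rightarrow> nat list \<Rightarrow> 'a tree" where
  "subtree t p = (\<lambda>q. t (p @ q))"

definition replace :: "'a tree \<Rightarrow> nat list \<Rightarrow> 'a tree \<Rightarrow> 'a tree" where
  "replace t p s = (\<lambda>q. if \<exists>q'. q = p @ q' then s (drop (length p) q) else t q)"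

datatype 'f tsym = Fun 'f | Var nat

text \<open>Symbols of proof terms: Sigma, one symbol per rule, and the binary composition dot.
  Multisteps are the well-formed proof-term trees without Dot; Sigma-terms have only F-symbols.\<close>
datatype ('f, 'r) psym = F 'f | R 'r | Dot

record ('f, 'r) trs =
  sig_ar :: "'f \<Rightarrow> nat"
  rl_ar  :: "'r \<Rightarrow> nat"
  rl_lhs :: "'r \<Rightarrow> 'f tsym tree"
  rl_rhs :: "'r \<Rightarrow> 'f tsym tree"

fun tsym_ar :: "('f \<Rightarrow> nat) \<Rightarrow> 'f tsym \<Rightarrow> nat" where
  "tsym_ar ar (Fun f) = ar f"
| "tsym_ar ar (Var j) = 0"

fun psym_ar :: "('f, 'r) trs \<Rightarrow> ('f, 'r) psym \<Rightarrow> nat" where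
  "psym_ar T (F f) = sig_ar T f"
| "psym_ar T (R \<mu>) = rl_ar T \<mu>"
| "psym_ar T Dot = 2"

definition tvars :: "'f tsym tree \<Rightarrow> nat set" where
  "tvars s = {j. \<exists>p. s p = Some (Var j)}"

definition linear_tree :: "'f tsym tree \<Rightarrow> bool" where
  "linear_tree s \<longleftrightarrow> (\<forall>p q j. s p = Some (Var j) \<and> s q = Some (Var j) \<longrightarrow> p = q)"

definition wf_trs :: "('f, 'r) trs \<Rightarrow> bool" where
  "wf_trs T \<longleftrightarrow> finite (UNIV :: 'f set) \<and>
     (\<forall>\<mu>. wf_tree (tsym_ar (sig_ar T)) (rl_lhs T \<mu>)
         \<and> finite {p. rl_lhs T \<mu> p \<noteq> None}
         \<and> (\<exists>f. rl_lhs T \<mu> [] = Some (Fun f))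
         \<and> linear_tree (rl_lhs T \<mu>)
         \<and> tvars (rl_lhs T \<mu>) = {..<rl_ar T \<mu>}
         \<and> wf_tree (tsym_ar (sig_ar T)) (rl_rhs T \<mu>)
         \<and> tvars (rl_rhs T \<mu>) \<subseteq> tvars (rl_lhs T \<mu>))"

definition inst :: "'f tsym tree \<Rightarrow> (nat \<Rightarrow> ('f, 'r) psym tree) \<Rightarrow> ('f, 'r) psym tree" where
  "inst s \<sigma> = (\<lambda>q.
     if \<exists>k j. k \<le> length q \<and> s (take k q) = Some (Var j) then
       (let k = (LEAST k. \<exists>j. k \<le> length q \<and> s (take k q) = Some (Var j))
        in \<sigma> (THE j. s (take k q) = Some (Var j)) (drop k q))
     else (case s q of Some (Fun f) \<Rightarrow> Some (F f) | _ \<Rightarrow> None))"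

definition inst_opt :: "'f tsym tree \<Rightarrow> (nat \<Rightarrow> ('f, 'r) psym tree option) \<Rightarrow> ('f, 'r) psym tree option" where
  "inst_opt s \<sigma> = (if \<forall>j \<in> tvars s. \<sigma> j \<noteq> None then Some (inst s (\<lambda>j. the (\<sigma> j))) else None)"

definition is_multistep :: "('f, 'r) trs \<Rightarrow> ('f, 'r) psym tree \<Rightarrow> bool" where
  "is_multistep T \<psi> \<longleftrightarrow> wf_tree (psym_ar T) \<psi> \<and> (\<forall>p. \<psi> p \<noteq> Some Dot)"

definition rstep :: "('r \<Rightarrow> 'f tsym tree) \<Rightarrow> ('f, 'r) psym tree \<Rightarrow> ('f, 'r) psym tree \<Rightarrow> nat list \<Rightarrow> bool" where
  "rstep side t t' p \<longleftrightarrow> (\<exists>\<mu>. t p = Some (R \<mu>) \<and>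
      t' = replace t p (inst (side \<mu>) (\<lambda>j. subtree t (p @ [j]))))"

text \<open>Strongly convergent reductions of length at most omega (finite, or omega-long with
  depths of contracted redexes tending to infinity and terms converging to the end term).\<close>
definition scred :: "('r \<Rightarrow> 'f tsym tree) \<Rightarrow> ('f, 'r) psym tree \<Rightarrow> ('f, 'r) psym tree \<Rightarrow> bool" where
  "scred side t u \<longleftrightarrow>
     (\<lambda>a b. \<exists>p. rstep side a b p)\<^sup>*\<^sup>* t u
     \<or> (\<exists>ts ps. ts 0 = t \<and> (\<forall>i. rstep side (ts i) (ts (Suc i)) (ps i))
          \<and> filterlim (\<lambda>i. length (ps i)) at_top sequentially
          \<and> (\<lambda>i. tdist (ts i) u) \<longlonglongrightarrow> 0)"

definition no_rule_sym :: "('f, 'r) psym tree \<Rightarrow> bool" where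
  "no_rule_sym u \<longleftrightarrow> (\<forall>p \<mu>. u p \<noteq> Some (R \<mu>))"

definition nform :: "('r \<Rightarrow> 'f tsym tree) \<Rightarrow> ('f, 'r) psym tree \<Rightarrow> ('f, 'r) psym tree option" where
  "nform side t = (if \<exists>u. scred side t u \<and> no_rule_sym u
                   then Some (THE u. scred side t u \<and> no_rule_sym u) else None)"

definition ms_mind :: "('f, 'r) psym tree \<Rightarrow> enat" where
  "ms_mind \<psi> = (if \<exists>p \<mu>. \<psi> p = Some (R \<mu>)
                 then enat (LEAST n. \<exists>p \<mu>. length p = n \<and> \<psi> p = Some (R \<mu>)) else \<infinity>)"

definition node :: "'a \<Rightarrow> 'a tree list \<Rightarrow> 'a tree" where
  "node a ts = (\<lambda>p. case p of [] \<Rightarrow> Some a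
                    | i # q \<Rightarrow> if i < length ts then (ts ! i) q else None)"

definition dot :: "('f, 'r) psym tree \<Rightarrow> ('f, 'r) psym tree \<Rightarrow> ('f, 'r) psym tree" where
  "dot a b = node Dot [a, b]"

text \<open>Infinite product  psi_0 . (psi_1 . (psi_2 . ...)).\<close>
fun iprod :: "(nat \<Rightarrow> ('f, 'r) psym tree) \<Rightarrow> ('f, 'r) psym tree" where
  "iprod \<psi> [] = Some Dot"
| "iprod \<psi> (i # q) = (if i = 0 then \<psi> 0 q
                       else if i = 1 then iprod (\<lambda>k. \<psi> (Suc k)) q else None)"

text \<open>PT T psi s t c m: psi is a proof term with src s, (partial) tgt t, convergence c and mind m.\<close>
inductive PT :: "('f, 'r) trs \<Rightarrow> ('f, 'r) psym tree \<Rightarrow> ('f, 'r) psym tree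
                 \<Rightarrow> ('f, 'r) psym tree option \<Rightarrow> bool \<Rightarrow> enat \<Rightarrow> bool"
  for T :: "('f, 'r) trs" where
  multistep: "is_multistep T \<psi> \<Longrightarrow>
     PT T \<psi> (the (nform (rl_lhs T) \<psi>)) (nform (rl_rhs T) \<psi>)
        (nform (rl_rhs T) \<psi> \<noteq> None) (ms_mind \<psi>)"
| comp: "PT T \<psi>1 s1 (Some t1) True m1 \<Longrightarrow> PT T \<psi>2 t1 t2 c2 m2 \<Longrightarrow>
     PT T (dot \<psi>1 \<psi>2) s1 t2 c2 (min m1 m2)"
| infprod: "(\<And>i. PT T (\<psi> i) (s i) (Some (s (Suc i))) True (m i)) \<Longrightarrow>
     PT T (iprod \<psi>) (s 0)
        (if \<exists>u. (\<lambda>i. tdist (s (Suc i)) u) \<longlonglongrightarrow> 0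
         then Some (THE u. (\<lambda>i. tdist (s (Suc i)) u) \<longlonglongrightarrow> 0) else None)
        (\<forall>k::nat. \<exists>n. \<forall>j>n. enat k < m j)
        (INF i. m i)"
| func: "length \<psi>s = sig_ar T f \<Longrightarrow> length ss = length \<psi>s \<Longrightarrow> length ts = length \<psi>s \<Longrightarrow>
     length cs = length \<psi>s \<Longrightarrow> length ms = length \<psi>s \<Longrightarrow>
     (\<forall>i < length \<psi>s. PT T (\<psi>s ! i) (ss ! i) (ts ! i) (cs ! i) (ms ! i)) \<Longrightarrow>
     PT T (node (F f) \<psi>s) (node (F f) ss)
        (if \<forall>i < length ts. ts ! i \<noteq> None then Some (node (F f) (map the ts)) else None)
        (\<forall>i < length cs. cs ! i)
        (1 + (INF i \<in> {..<length ms}. ms ! i))"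
| rule: "length \<psi>s = rl_ar T \<mu> \<Longrightarrow> length ss = length \<psi>s \<Longrightarrow> length ts = length \<psi>s \<Longrightarrow>
     length cs = length \<psi>s \<Longrightarrow> length ms = length \<psi>s \<Longrightarrow>
     (\<forall>i < length \<psi>s. PT T (\<psi>s ! i) (ss ! i) (ts ! i) (cs ! i) (ms ! i)) \<Longrightarrow>
     PT T (node (R \<mu>) \<psi>s) (inst (rl_lhs T \<mu>) (\<lambda>j. ss ! j))
        (inst_opt (rl_rhs T \<mu>) (\<lambda>j. ts ! j))
        (\<forall>i < length cs. i \<in> tvars (rl_rhs T \<mu>) \<longrightarrow> cs ! i)
        0"

end

theory Submission
  imports Defs
begin

text \<open>Agreement up to depth \<open>n\<close> is transitive and
  compatible with forming nodes, so composition, function symbols and rule symbols are routine;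
  two cases carry the content. For an infinite product the convergence condition makes
  consecutive targets agree ever deeper, so they converge in the tree metric. For a multistep the
  source and the target coincide with the multistep itself above its shallowest rule symbol. This
  rests on a description of the symbols of a normal form by unfolding rule symbols top-down: the
  description is invariant under rewrite steps, which makes normal forms unique. The source exists
  because contracting a shallowest redex, whose left-hand side is linear and not a variable, strictly
  decreases the number of redexes up to every depth, so these contractions converge strongly.\<close>

section \<open>Agreement up to a depth\<close>

definition eq_upto :: "nat \<Rightarrow> 'a tree \<Rightarrow> 'a tree \<Rightarrow> bool" where
  "eq_upto n t u \<longleftrightarrow> (\<forall>q. length q \<le> n \<longrightarrow> t q = u q)"

lemma eq_upto_refl [simp]: "eq_upto n t t"
  by (simp add: eq_upto_def)

lemma eq_upto_trans: "eq_upto n a b \<Longrightarrow> eq_upto n b c \<Longrightarrow> eq_upto n a c"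
  by (simp add: eq_upto_def)

lemma tdist_nonneg: "0 \<le> tdist t u"
  by (simp add: tdist_def)

lemma tdist_less_iff_eq_upto: "tdist t u < (1/2) ^ n \<longleftrightarrow> eq_upto n t u"
proof (cases "t = u")
  case True
  then show ?thesis by (simp add: tdist_def)
next
  case False
  then obtain p where "t p \<noteq> u p"
    by auto
  define K where "K = (LEAST k. \<exists>p. length p = k \<and> t p \<noteq> u p)"
  have "\<exists>p. length p = K \<and> t p \<noteq> u p"
    unfolding K_def by (rule LeastI[of _ "length p"]) (use \<open>t p \<noteq> u p\<close> in auto)
  moreover have "\<And>q. t q \<noteq> u q \<Longrightarrow> K \<le> length q"
    unfolding K_def by (rule Least_le) auto
  ultimately have "eq_upto n t u \<longleftrightarrow> n < K"
    unfolding eq_upto_def by (meson le_trans not_le)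
  moreover have "tdist t u = (1/2) ^ K"
    using False by (simp add: tdist_def K_def)
  ultimately show ?thesis
    by (simp add: power_strict_decreasing_iff)
qed

lemma tdist_tendsto_0_iff:
  "(\<lambda>i. tdist (x i) u) \<longlonglongrightarrow> 0 \<longleftrightarrow> (\<forall>k. \<exists>N. \<forall>i\<ge>N. eq_upto k (x i) u)"
proof
  assume lim: "(\<lambda>i. tdist (x i) u) \<longlonglongrightarrow> 0"
  show "\<forall>k. \<exists>N. \<forall>i\<ge>N. eq_upto k (x i) u"
  proof
    fix k
    obtain N where "\<forall>i\<ge>N. norm (tdist (x i) u - 0) < (1/2) ^ k"
      using LIMSEQ_D[OF lim, of "(1/2) ^ k"] by auto
    then show "\<exists>N. \<forall>i\<ge>N. eq_upto k (x i) u"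
      by (auto simp: tdist_less_iff_eq_upto[symmetric] tdist_nonneg)
  qed
next
  assume ev: "\<forall>k. \<exists>N. \<forall>i\<ge>N. eq_upto k (x i) u"
  show "(\<lambda>i. tdist (x i) u) \<longlonglongrightarrow> 0"
  proof (rule LIMSEQ_I)
    fix r :: real
    assume "0 < r"
    then obtain k where k: "(1/2::real) ^ k < r"
      using real_arch_pow_inv[of r "1/2"] by auto
    obtain N where "\<forall>i\<ge>N. eq_upto k (x i) u"
      using ev by blast
    then have "\<forall>i\<ge>N. tdist (x i) u < r"
      using k by (metis tdist_less_iff_eq_upto less_trans)
    then show "\<exists>N. \<forall>i\<ge>N. norm (tdist (x i) u - 0) < r"
      by (auto simp: tdist_nonneg)
  qed
qed

lemma tdist_tendsto_0_unique:
  assumes "(\<lambda>i. tdist (x i) u) \<longlonglongrightarrow> 0" and "(\<lambda>i. tdist (x i) v) \<longlonglongrightarrow> 0"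
  shows "u = v"
proof
  fix q :: "nat list"
  obtain N1 N2 where "\<forall>i\<ge>N1. eq_upto (length q) (x i) u" and "\<forall>i\<ge>N2. eq_upto (length q) (x i) v"
    using assms unfolding tdist_tendsto_0_iff by blast
  then have "eq_upto (length q) (x (max N1 N2)) u" and "eq_upto (length q) (x (max N1 N2)) v"
    by simp_all
  then show "u q = v q"
    by (simp add: eq_upto_def)
qed

lemma eq_upto_chain:
  assumes "\<And>i. N \<le> i \<Longrightarrow> i < j \<Longrightarrow> eq_upto k (x i) (x (Suc i))" and "N \<le> j"
  shows "eq_upto k (x N) (x j)"
  using assms(2,1)
proof (induction j rule: dec_induct)
  case (step j)
  then show ?case
    using eq_upto_trans[of k "x N" "x j" "x (Suc j)"] by simp
qed simp

lemma eq_upto_Suc_imp_convergent: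
  assumes "\<forall>k. \<exists>N. \<forall>i\<ge>N. eq_upto k (x i) (x (Suc i))"
  obtains u where "\<forall>k. \<exists>N. \<forall>i\<ge>N. eq_upto k (x i) u"
proof -
  from assms obtain N where N: "\<And>k i. N k \<le> i \<Longrightarrow> eq_upto k (x i) (x (Suc i))"
    by (metis (mono_tags))
  have stable: "eq_upto k (x i) (x j)" if "N k \<le> i" "i \<le> j" for k i j
    using eq_upto_chain[of i j k x] N that by auto
  define u where "u q = x (N (length q)) q" for q
  have "eq_upto k (x i) u" if "N k \<le> i" for k i
    unfolding eq_upto_def
  proof (intro allI impI)
    fix q :: "nat list"
    assume q: "length q \<le> k"
    define j where "j = max i (N (length q))"
    have "x i q = x j q"
      using stable[of k i j] that q by (simp add: eq_upto_def j_def)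
    also have "\<dots> = u q"
      using stable[of "length q" "N (length q)" j] by (simp add: eq_upto_def j_def u_def)
    finally show "x i q = u q" .
  qed
  then show ?thesis
    using that by blast
qed

section \<open>Symbols of normal forms\<close>

definition first_var :: "'f tsym tree \<Rightarrow> nat list \<Rightarrow> nat \<Rightarrow> nat \<Rightarrow> bool" where
  "first_var s q k j \<longleftrightarrow> k \<le> length q \<and> s (take k q) = Some (Var j)
     \<and> (\<forall>k'<k. \<forall>j'. s (take k' q) \<noteq> Some (Var j'))"

definition var_free :: "'f tsym tree \<Rightarrow> nat list \<Rightarrow> bool" where
  "var_free s q \<longleftrightarrow> (\<forall>k\<le>length q. \<forall>j. s (take k q) \<noteq> Some (Var j))"

lemma first_var_unique:
  assumes "first_var s q k j" and "first_var s q k' j'"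
  shows "k = k' \<and> j = j'"
proof -
  have "\<not> k < k'" and "\<not> k' < k"
    using assms unfolding first_var_def by blast+
  then have "k = k'"
    by simp
  then show ?thesis
    using assms by (simp add: first_var_def)
qed

lemma first_var_or_var_free: "(\<exists>k j. first_var s q k j) \<or> var_free s q"
proof (cases "var_free s q")
  case False
  define P where "P k \<longleftrightarrow> (\<exists>j. k \<le> length q \<and> s (take k q) = Some (Var j))" for k
  have "\<exists>k. P k"
    using False by (auto simp: var_free_def P_def)
  then have "P (Least P)"
    by (rule LeastI_ex)
  moreover have "\<And>k'. k' < Least P \<Longrightarrow> \<not> P k'"
    by (rule not_less_Least)
  ultimately obtain j where "first_var s q (Least P) j"
    unfolding first_var_def P_def by (meson less_imp_le order_trans)
  then show ?thesis
    by blast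
qed simp

lemma first_var_not_var_free: "first_var s q k j \<Longrightarrow> \<not> var_free s q"
  by (auto simp: first_var_def var_free_def)

lemma inst_first_var: "first_var s q k j \<Longrightarrow> inst s \<sigma> q = \<sigma> j (drop k q)"
proof -
  assume fv: "first_var s q k j"
  then have ex: "\<exists>k j. k \<le> length q \<and> s (take k q) = Some (Var j)"
    by (auto simp: first_var_def)
  have "(LEAST k. \<exists>j. k \<le> length q \<and> s (take k q) = Some (Var j)) = k"
    using fv by (intro Least_equality) (auto simp: first_var_def not_le[symmetric])
  moreover have "(THE j'. s (take k q) = Some (Var j')) = j"
    using fv by (simp add: first_var_def)
  ultimately show ?thesis
    unfolding inst_def if_P[OF ex] Let_def by simp
qed

lemma inst_var_free:
  "var_free s q \<Longrightarrow> inst s \<sigma> q = (case s q of Some (Fun f) \<Rightarrow> Some (F f) | _ \<Rightarrow> None)"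
proof -
  assume "var_free s q"
  then have "\<not> (\<exists>k j. k \<le> length q \<and> s (take k q) = Some (Var j))"
    by (auto simp: var_free_def)
  then show ?thesis
    unfolding inst_def by (simp only: if_False)
qed

lemma var_free_take: "var_free s q \<Longrightarrow> var_free s (take k q)"
  by (auto simp: var_free_def min_def)

lemma first_var_take_append: "first_var s q k j \<Longrightarrow> first_var s (take k q @ r) k j"
  by (auto simp: first_var_def min_def)

lemma first_var_prefix_var_free: "first_var s q k j \<Longrightarrow> k' < k \<Longrightarrow> var_free s (take k' q)"
  by (auto simp: first_var_def var_free_def min_def)

lemma inst_var_free_not_rule: "var_free s q \<Longrightarrow> inst s \<sigma> q \<noteq> Some (R \<mu>)"
  by (simp add: inst_var_free split: option.split tsym.split)

text \<open>\<open>nf_sym side \<psi> q a\<close>: the normal form of \<open>\<psi>\<close> under the rules \<open>\<mu>(\<dots>) \<rightarrow> side \<mu>\<close>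
  carries the symbol \<open>a\<close> at position \<open>q\<close>. It is computed by unfolding rule symbols top-down,
  so it makes sense without knowing that the normal form exists.\<close>
inductive nf_sym :: "('r \<Rightarrow> 'f tsym tree) \<Rightarrow> ('f, 'r) psym tree \<Rightarrow> nat list \<Rightarrow> ('f, 'r) psym \<Rightarrow> bool"
  for side where
  root: "\<psi> [] = Some a \<Longrightarrow> \<forall>\<mu>. a \<noteq> R \<mu> \<Longrightarrow> nf_sym side \<psi> [] a"
| arg: "\<forall>\<mu>. \<psi> [] \<noteq> Some (R \<mu>) \<Longrightarrow> nf_sym side (subtree \<psi> [i]) q a \<Longrightarrow> nf_sym side \<psi> (i # q) a"
| rule_var: "\<psi> [] = Some (R \<mu>) \<Longrightarrow> first_var (side \<mu>) q k j \<Longrightarrow>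
    nf_sym side (subtree \<psi> [j]) (drop k q) a \<Longrightarrow> nf_sym side \<psi> q a"
| rule_fun: "\<psi> [] = Some (R \<mu>) \<Longrightarrow> var_free (side \<mu>) q \<Longrightarrow> side \<mu> q = Some (Fun f) \<Longrightarrow>
    nf_sym side \<psi> q (F f)"

definition inst_sym :: "('a \<Rightarrow> nat list \<Rightarrow> ('f, 'r) psym \<Rightarrow> bool) \<Rightarrow> 'f tsym tree \<Rightarrow> (nat \<Rightarrow> 'a)
    \<Rightarrow> nat list \<Rightarrow> ('f, 'r) psym \<Rightarrow> bool" where
  "inst_sym P s \<sigma> q a \<longleftrightarrow> (\<exists>k j. first_var s q k j \<and> P (\<sigma> j) (drop k q) a)
     \<or> (var_free s q \<and> (\<exists>f. s q = Some (Fun f) \<and> a = F f))"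

lemma nf_sym_rule_root:
  "\<psi> [] = Some (R \<mu>) \<Longrightarrow> nf_sym side \<psi> q a \<longleftrightarrow> inst_sym (nf_sym side) (side \<mu>) (\<lambda>j. subtree \<psi> [j]) q a"
proof
  assume "nf_sym side \<psi> q a" and "\<psi> [] = Some (R \<mu>)"
  then show "inst_sym (nf_sym side) (side \<mu>) (\<lambda>j. subtree \<psi> [j]) q a"
    by (cases rule: nf_sym.cases) (auto simp: inst_sym_def)
next
  assume "inst_sym (nf_sym side) (side \<mu>) (\<lambda>j. subtree \<psi> [j]) q a" and "\<psi> [] = Some (R \<mu>)"
  then show "nf_sym side \<psi> q a"
    unfolding inst_sym_def by (auto intro: nf_sym.rule_var nf_sym.rule_fun)
qed

lemma nf_sym_Nil: "\<forall>\<mu>. \<psi> [] \<noteq> Some (R \<mu>) \<Longrightarrow> nf_sym side \<psi> [] a \<longleftrightarrow> \<psi> [] = Some a"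
  by (auto elim: nf_sym.cases intro: nf_sym.root)

lemma nf_sym_Cons:
  "\<forall>\<mu>. \<psi> [] \<noteq> Some (R \<mu>) \<Longrightarrow> nf_sym side \<psi> (i # q) a \<longleftrightarrow> nf_sym side (subtree \<psi> [i]) q a"
  by (auto elim: nf_sym.cases intro: nf_sym.arg)

lemma subtree_subtree: "subtree (subtree \<psi> p) q = subtree \<psi> (p @ q)"
  by (simp add: subtree_def)

lemma nf_sym_append:
  "\<forall>k<length p. \<forall>\<mu>. \<psi> (take k p) \<noteq> Some (R \<mu>) \<Longrightarrow>
    nf_sym side \<psi> (p @ q) a \<longleftrightarrow> nf_sym side (subtree \<psi> p) q a"
proof (induction p arbitrary: \<psi>)
  case Nil
  then show ?case by (simp add: subtree_def)
next
  case (Cons i p)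
  have "\<forall>\<mu>. \<psi> [] \<noteq> Some (R \<mu>)"
    using Cons.prems by force
  moreover have "\<forall>k<length p. \<forall>\<mu>. subtree \<psi> [i] (take k p) \<noteq> Some (R \<mu>)"
    using Cons.prems by (auto simp: subtree_def)
  ultimately show ?case
    using Cons.IH[of "subtree \<psi> [i]"] by (simp add: nf_sym_Cons subtree_subtree)
qed

definition rule_free :: "('f, 'r) psym tree \<Rightarrow> nat list \<Rightarrow> bool" where
  "rule_free \<psi> q \<longleftrightarrow> (\<forall>k\<le>length q. \<forall>\<mu>. \<psi> (take k q) \<noteq> Some (R \<mu>))"

lemma nf_sym_rule_free: "rule_free \<psi> q \<Longrightarrow> nf_sym side \<psi> q a \<longleftrightarrow> \<psi> q = Some a"
proof -
  assume rf: "rule_free \<psi> q"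
  then have "nf_sym side \<psi> (q @ []) a \<longleftrightarrow> nf_sym side (subtree \<psi> q) [] a"
    by (intro nf_sym_append) (auto simp: rule_free_def)
  moreover have "\<forall>\<mu>. subtree \<psi> q [] \<noteq> Some (R \<mu>)"
    using rf by (auto simp: rule_free_def subtree_def dest: spec[of _ "length q"])
  ultimately show ?thesis
    by (simp add: nf_sym_Nil) (simp add: subtree_def)
qed

lemma nf_sym_inst: "nf_sym side (inst s \<sigma>) q a \<longleftrightarrow> inst_sym (nf_sym side) s \<sigma> q a"
  using first_var_or_var_free[of s q]
proof
  assume "\<exists>k j. first_var s q k j"
  then obtain k j where fv: "first_var s q k j"
    by blast
  then have lk: "length (take k q) = k"
    by (simp add: first_var_def)
  have "subtree (inst s \<sigma>) (take k q) = \<sigma> j"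
  proof
    fix r
    show "subtree (inst s \<sigma>) (take k q) r = \<sigma> j r"
      using inst_first_var[OF first_var_take_append[OF fv], of \<sigma>] lk by (simp add: subtree_def)
  qed
  moreover have "inst s \<sigma> (take k' (take k q)) \<noteq> Some (R \<mu>)" if "k' < length (take k q)" for k' \<mu>
  proof -
    have "take k' (take k q) = take k' q" and "var_free s (take k' q)"
      using that lk first_var_prefix_var_free[OF fv, of k'] by (simp_all add: min_def)
    then show ?thesis
      by (simp add: inst_var_free_not_rule)
  qed
  ultimately have "nf_sym side (inst s \<sigma>) q a \<longleftrightarrow> nf_sym side (\<sigma> j) (drop k q) a"
    using nf_sym_append[of "take k q" "inst s \<sigma>" side "drop k q" a] by simp
  also have "\<dots> \<longleftrightarrow> inst_sym (nf_sym side) s \<sigma> q a"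
    unfolding inst_sym_def using fv first_var_not_var_free[OF fv] first_var_unique[OF fv] by blast
  finally show ?thesis .
next
  assume vf: "var_free s q"
  then have "rule_free (inst s \<sigma>) q"
    by (simp add: rule_free_def inst_var_free_not_rule var_free_take)
  then have "nf_sym side (inst s \<sigma>) q a \<longleftrightarrow> inst s \<sigma> q = Some a"
    by (rule nf_sym_rule_free)
  also have "\<dots> \<longleftrightarrow> (\<exists>f. s q = Some (Fun f) \<and> a = F f)"
    using inst_var_free[OF vf, of \<sigma>] by (auto split: option.split tsym.split)
  also have "\<dots> \<longleftrightarrow> inst_sym (nf_sym side) s \<sigma> q a"
    unfolding inst_sym_def using vf first_var_not_var_free by blast
  finally show ?thesis .
qed

lemma nf_sym_cong:
  assumes "\<psi>' [] = \<psi> []" and "\<And>j r b. nf_sym side (subtree \<psi>' [j]) r b \<longleftrightarrow> nf_sym side (subtree \<psi> [j]) r b"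
  shows "nf_sym side \<psi>' q a \<longleftrightarrow> nf_sym side \<psi> q a"
proof (cases "\<exists>\<mu>. \<psi> [] = Some (R \<mu>)")
  case True
  then obtain \<mu> where "\<psi> [] = Some (R \<mu>)"
    by blast
  then show ?thesis
    using assms by (simp add: nf_sym_rule_root inst_sym_def)
next
  case False
  then show ?thesis
    using assms by (cases q) (simp_all add: nf_sym_Nil nf_sym_Cons)
qed

lemma replace_Nil [simp]: "replace t [] X = X"
  by (simp add: replace_def)

lemma replace_Cons_Nil [simp]: "replace t (i # p) X [] = t []"
  by (simp add: replace_def)

lemma subtree_replace_Cons:
  "subtree (replace t (i # p) X) [j] = (if j = i then replace (subtree t [i]) p X else subtree t [j])"
  by (auto simp: subtree_def replace_def)

lemma nf_sym_rstep: "rstep side \<psi> \<psi>' p \<Longrightarrow> nf_sym side \<psi>' q a \<longleftrightarrow> nf_sym side \<psi> q a"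
proof (induction p arbitrary: \<psi> \<psi>' q a)
  case Nil
  then obtain \<mu> where "\<psi> [] = Some (R \<mu>)" and "\<psi>' = inst (side \<mu>) (\<lambda>j. subtree \<psi> [j])"
    by (auto simp: rstep_def)
  then show ?case
    by (simp add: nf_sym_inst nf_sym_rule_root)
next
  case (Cons i p)
  then obtain \<mu> where \<mu>: "\<psi> (i # p) = Some (R \<mu>)"
    and \<psi>': "\<psi>' = replace \<psi> (i # p) (inst (side \<mu>) (\<lambda>j. subtree \<psi> (i # p @ [j])))"
    by (auto simp: rstep_def)
  have "rstep side (subtree \<psi> [i]) (subtree \<psi>' [i]) p"
    unfolding rstep_def \<psi>' subtree_replace_Cons using \<mu> by (simp add: subtree_def)
  then have "nf_sym side (subtree \<psi>' [j]) r b \<longleftrightarrow> nf_sym side (subtree \<psi> [j]) r b" for j r b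
    using Cons.IH unfolding \<psi>' subtree_replace_Cons by (cases "j = i") simp_all
  moreover have "\<psi>' [] = \<psi> []"
    by (simp add: \<psi>')
  ultimately show ?case
    by (rule nf_sym_cong[rotated])
qed

lemma nf_sym_rtranclp:
  "(\<lambda>a b. \<exists>p. rstep side a b p)\<^sup>*\<^sup>* \<psi> \<psi>' \<Longrightarrow> nf_sym side \<psi>' q a \<longleftrightarrow> nf_sym side \<psi> q a"
  by (induction rule: rtranclp_induct) (auto simp: nf_sym_rstep)

lemma nf_sym_scred:
  assumes "scred side \<psi> u" and "no_rule_sym u"
  shows "u q = Some a \<longleftrightarrow> nf_sym side \<psi> q a"
proof -
  have rf: "rule_free u q"
    using assms(2) by (simp add: no_rule_sym_def rule_free_def)
  show ?thesis
    using assms(1) unfolding scred_def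
  proof
    assume "(\<lambda>a b. \<exists>p. rstep side a b p)\<^sup>*\<^sup>* \<psi> u"
    then show ?thesis
      using nf_sym_rtranclp nf_sym_rule_free[OF rf] by metis
  next
    assume "\<exists>ts ps. ts 0 = \<psi> \<and> (\<forall>i. rstep side (ts i) (ts (Suc i)) (ps i))
          \<and> filterlim (\<lambda>i. length (ps i)) at_top sequentially \<and> (\<lambda>i. tdist (ts i) u) \<longlonglongrightarrow> 0"
    then obtain ts ps where ts0: "ts 0 = \<psi>" and steps: "\<And>i. rstep side (ts i) (ts (Suc i)) (ps i)"
      and lim: "(\<lambda>i. tdist (ts i) u) \<longlonglongrightarrow> 0"
      by blast
    have inv: "nf_sym side (ts i) q' b \<longleftrightarrow> nf_sym side \<psi> q' b" for i q' b
      by (induction i) (simp_all add: ts0 nf_sym_rstep[OF steps])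
    obtain N where "\<forall>i\<ge>N. eq_upto (length q) (ts i) u"
      using lim unfolding tdist_tendsto_0_iff by blast
    then have "eq_upto (length q) (ts N) u"
      by simp
    then have "rule_free (ts N) q" and "ts N q = u q"
      using rf by (auto simp: eq_upto_def rule_free_def)
    then show ?thesis
      using nf_sym_rule_free[of "ts N" q side a] inv by simp
  qed
qed

lemma nform_eqI:
  assumes "scred side \<psi> u" and "no_rule_sym u"
  shows "nform side \<psi> = Some u"
proof -
  have "v = u" if "scred side \<psi> v" "no_rule_sym v" for v
  proof
    fix q
    show "v q = u q"
      using nf_sym_scred[OF assms, of q] nf_sym_scred[OF that, of q] by (cases "v q"; cases "u q") auto
  qed
  then have "(THE u. scred side \<psi> u \<and> no_rule_sym u) = u"
    using assms by blast
  then show ?thesis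
    using assms unfolding nform_def by auto
qed

section \<open>Existence of normal forms for linear non-variable patterns\<close>

definition linear_patterns :: "('r \<Rightarrow> 'f tsym tree) \<Rightarrow> bool" where
  "linear_patterns side \<longleftrightarrow> (\<forall>\<mu>. (\<exists>f. side \<mu> [] = Some (Fun f)) \<and> linear_tree (side \<mu>))"

definition redexes_upto :: "nat \<Rightarrow> ('f, 'r) psym tree \<Rightarrow> nat list set" where
  "redexes_upto d t = {q. length q \<le> d \<and> (\<exists>\<mu>. t q = Some (R \<mu>))}"

lemma finite_positions_upto: "wf_tree ar t \<Longrightarrow> finite {q. length q \<le> d \<and> t q \<noteq> None}"
proof (induction d)
  case 0
  have "{q. length q \<le> 0 \<and> t q \<noteq> None} \<subseteq> {[]}"
    by auto
  then show ?case
    using finite_subset by blast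
next
  case (Suc d)
  define A where "A = {q. length q \<le> d \<and> t q \<noteq> None}"
  have "{q. length q \<le> Suc d \<and> t q \<noteq> None} \<subseteq> A \<union> (\<Union>p\<in>A. (\<lambda>i. p @ [i]) ` {..<ar (the (t p))})"
  proof
    fix q
    assume q: "q \<in> {q. length q \<le> Suc d \<and> t q \<noteq> None}"
    show "q \<in> A \<union> (\<Union>p\<in>A. (\<lambda>i. p @ [i]) ` {..<ar (the (t p))})"
    proof (cases "length q \<le> d")
      case True
      then show ?thesis
        using q by (simp add: A_def)
    next
      case False
      then obtain p i where qe: "q = p @ [i]"
        by (metis le0 list.size(3) rev_exhaust)
      then have "t (p @ [i]) \<noteq> None"
        using q by simp
      then obtain a where "t p = Some a" and "i < ar a"
        using Suc.prems unfolding wf_tree_def by blast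
      moreover have "length p \<le> d"
        using q qe by simp
      ultimately show ?thesis
        using qe by (auto simp: A_def)
    qed
  qed
  moreover have "finite A"
    using Suc by (simp add: A_def)
  ultimately show ?case
    using finite_subset by blast
qed

lemma finite_redexes_upto: "wf_tree ar t \<Longrightarrow> finite (redexes_upto d t)"
  by (rule finite_subset[OF _ finite_positions_upto[of ar t d]]) (auto simp: redexes_upto_def)

definition var_residual :: "'f tsym tree \<Rightarrow> nat list \<Rightarrow> nat list" where
  "var_residual s q = (THE v. \<exists>k j. first_var s q k j \<and> v = j # drop k q)"

lemma var_residual_eq: "first_var s q k j \<Longrightarrow> var_residual s q = j # drop k q"
  unfolding var_residual_def by (rule the_equality) (auto dest: first_var_unique)

lemma var_residual_inj:
  assumes "linear_tree s" and "first_var s q k j" and "first_var s q' k' j'"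
    and "var_residual s q = var_residual s q'"
  shows "q = q'"
proof -
  have "j = j'" and drop: "drop k q = drop k' q'"
    using assms(2-4) by (simp_all add: var_residual_eq)
  then have "take k q = take k' q'"
    using assms(1-3) unfolding linear_tree_def first_var_def by blast
  then show ?thesis
    using drop by (metis append_take_drop_id)
qed

lemma rstep_at:
  assumes "rstep side t t' p" and "t p = Some (R \<mu>)"
  shows "t' = replace t p (inst (side \<mu>) (\<lambda>j. subtree t (p @ [j])))"
  using assms by (auto simp: rstep_def)

lemma rstep_outside: "rstep side t t' p \<Longrightarrow> \<nexists>r. q = p @ r \<Longrightarrow> t' q = t q"
  by (auto simp: rstep_def replace_def)

lemma rstep_eq_upto:
  assumes "rstep side t t' p" and "d < length p"
  shows "eq_upto d t t'"
proof -
  have "t' q = t q" if "length q \<le> d" for q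
    using that assms by (intro rstep_outside[OF assms(1)]) auto
  then show ?thesis
    by (simp add: eq_upto_def)
qed

text \<open>A redex created by contracting a redex at \<open>p\<close> is a copy of a redex in an argument of the
  contracted redex; since the pattern is not a variable, the copy is strictly deeper.\<close>
lemma rstep_redex_origin:
  assumes step: "rstep side t t' p" and \<mu>: "t p = Some (R \<mu>)" and pat: "linear_patterns side"
    and "t' (p @ r) = Some (R \<mu>')"
  obtains k j where "first_var (side \<mu>) r k j" and "0 < k" and "t (p @ j # drop k r) = Some (R \<mu>')"
proof -
  have inst: "inst (side \<mu>) (\<lambda>j. subtree t (p @ [j])) r = Some (R \<mu>')"
    using assms(4) rstep_at[OF step \<mu>] by (simp add: replace_def)
  then have "\<not> var_free (side \<mu>) r"
    using inst_var_free_not_rule by metis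
  then obtain k j where fv: "first_var (side \<mu>) r k j"
    using first_var_or_var_free[of "side \<mu>" r] by blast
  obtain f where "side \<mu> [] = Some (Fun f)"
    using pat by (auto simp: linear_patterns_def)
  with fv have "0 < k"
    by (cases k) (auto simp: first_var_def)
  moreover have "t (p @ j # drop k r) = Some (R \<mu>')"
    using inst inst_first_var[OF fv, of "\<lambda>j. subtree t (p @ [j])"] by (simp add: subtree_def)
  ultimately show ?thesis
    using that fv by blast
qed

definition redex_origin :: "nat list \<Rightarrow> 'f tsym tree \<Rightarrow> nat list \<Rightarrow> nat list" where
  "redex_origin p s q = (if \<exists>r. q = p @ r then p @ var_residual s (drop (length p) q) else q)"

lemma redex_origin_mem:
  assumes step: "rstep side t t' p" and \<mu>: "t p = Some (R \<mu>)" and pat: "linear_patterns side"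
    and q: "q \<in> redexes_upto d t'"
  shows "redex_origin p (side \<mu>) q \<in> redexes_upto d t - {p}"
proof -
  obtain \<mu>' where lq: "length q \<le> d" and tq: "t' q = Some (R \<mu>')"
    using q by (auto simp: redexes_upto_def)
  show ?thesis
  proof (cases "\<exists>r. q = p @ r")
    case True
    then obtain r where r: "q = p @ r"
      by blast
    then obtain k j where fv: "first_var (side \<mu>) r k j" and "0 < k"
      and "t (p @ j # drop k r) = Some (R \<mu>')"
      using rstep_redex_origin[OF step \<mu> pat] tq by metis
    moreover have "k \<le> length r"
      using fv by (simp add: first_var_def)
    ultimately show ?thesis
      using r lq by (auto simp: redex_origin_def redexes_upto_def var_residual_eq)
  next
    case False
    then show ?thesis
      using lq tq rstep_outside[OF step False] by (auto simp: redex_origin_def redexes_upto_def)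
  qed
qed

lemma inj_on_redex_origin:
  assumes step: "rstep side t t' p" and \<mu>: "t p = Some (R \<mu>)" and pat: "linear_patterns side"
  shows "inj_on (redex_origin p (side \<mu>)) (redexes_upto d t')"
proof
  fix q1 q2
  assume q1: "q1 \<in> redexes_upto d t'" and q2: "q2 \<in> redexes_upto d t'"
    and eq: "redex_origin p (side \<mu>) q1 = redex_origin p (side \<mu>) q2"
  have below_iff: "(\<exists>r. redex_origin p (side \<mu>) q = p @ r) \<longleftrightarrow> (\<exists>r. q = p @ r)" for q
    by (auto simp: redex_origin_def)
  show "q1 = q2"
  proof (cases "\<exists>r. q1 = p @ r")
    case True
    then obtain r1 r2 where r1: "q1 = p @ r1" and r2: "q2 = p @ r2"
      using eq below_iff by metis
    obtain k1 j1 k2 j2 where "first_var (side \<mu>) r1 k1 j1" and "first_var (side \<mu>) r2 k2 j2"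
      using q1 q2 r1 r2 rstep_redex_origin[OF step \<mu> pat] by (auto simp: redexes_upto_def) metis
    moreover have "var_residual (side \<mu>) r1 = var_residual (side \<mu>) r2"
      using eq r1 r2 by (simp add: redex_origin_def)
    moreover have "linear_tree (side \<mu>)"
      using pat by (simp add: linear_patterns_def)
    ultimately show ?thesis
      using var_residual_inj r1 r2 by blast
  next
    case False
    then show ?thesis
      using eq below_iff by (metis redex_origin_def)
  qed
qed

lemma redexes_upto_rstep:
  assumes step: "rstep side t t' p" and pat: "linear_patterns side"
    and fin: "finite (redexes_upto d t)"
  shows "finite (redexes_upto d t') \<and> card (redexes_upto d t') \<le> card (redexes_upto d t - {p})"
proof -
  obtain \<mu> where \<mu>: "t p = Some (R \<mu>)"
    using step by (auto simp: rstep_def)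
  have "inj_on (redex_origin p (side \<mu>)) (redexes_upto d t')"
    by (rule inj_on_redex_origin[OF step \<mu> pat])
  moreover have "redex_origin p (side \<mu>) ` redexes_upto d t' \<subseteq> redexes_upto d t - {p}"
    by (rule image_subsetI) (rule redex_origin_mem[OF step \<mu> pat])
  moreover have "finite (redexes_upto d t - {p})"
    using fin by simp
  ultimately show ?thesis
    by (meson card_inj_on_le finite_imageD finite_subset)
qed

definition min_redex :: "('f, 'r) psym tree \<Rightarrow> nat list" where
  "min_redex t = (SOME p. (\<exists>\<mu>. t p = Some (R \<mu>)) \<and> (\<forall>p' \<mu>. t p' = Some (R \<mu>) \<longrightarrow> length p \<le> length p'))"

definition min_step :: "('r \<Rightarrow> 'f tsym tree) \<Rightarrow> ('f, 'r) psym tree \<Rightarrow> ('f, 'r) psym tree" where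
  "min_step side t = (if no_rule_sym t then t else SOME t'. rstep side t t' (min_redex t))"

lemma min_redex_minimal:
  assumes "\<not> no_rule_sym t"
  shows "\<exists>\<mu>. t (min_redex t) = Some (R \<mu>)"
    and "t p = Some (R \<mu>) \<Longrightarrow> length (min_redex t) \<le> length p"
proof -
  obtain p0 where "\<exists>\<mu>. t p0 = Some (R \<mu>)"
    using assms by (auto simp: no_rule_sym_def)
  then have "\<exists>p. (\<exists>\<mu>. t p = Some (R \<mu>)) \<and> (\<forall>p' \<mu>. t p' = Some (R \<mu>) \<longrightarrow> length p \<le> length p')"
    using ex_has_least_nat[of "\<lambda>p. \<exists>\<mu>. t p = Some (R \<mu>)" p0 length] by blast
  then have "(\<exists>\<mu>. t (min_redex t) = Some (R \<mu>))
      \<and> (\<forall>p' \<mu>. t p' = Some (R \<mu>) \<longrightarrow> length (min_redex t) \<le> length p')"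
    unfolding min_redex_def by (rule someI_ex)
  then show "\<exists>\<mu>. t (min_redex t) = Some (R \<mu>)"
    and "t p = Some (R \<mu>) \<Longrightarrow> length (min_redex t) \<le> length p"
    by blast+
qed

lemma min_step_no_rule_sym: "no_rule_sym t \<Longrightarrow> min_step side t = t"
  by (simp add: min_step_def)

lemma rstep_min_step: "\<not> no_rule_sym t \<Longrightarrow> rstep side t (min_step side t) (min_redex t)"
  using min_redex_minimal(1)[of t] unfolding min_step_def by (auto simp: rstep_def intro: someI_ex)

lemma redexes_upto_min_step:
  assumes pat: "linear_patterns side" and fin: "finite (redexes_upto d t)"
  shows "finite (redexes_upto d (min_step side t))
    \<and> card (redexes_upto d (min_step side t)) \<le> card (redexes_upto d t) - 1"
proof (cases "no_rule_sym t")
  case True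
  then show ?thesis
    using fin by (simp add: min_step_def redexes_upto_def no_rule_sym_def)
next
  case False
  define p where "p = min_redex t"
  have step: "finite (redexes_upto d (min_step side t))
      \<and> card (redexes_upto d (min_step side t)) \<le> card (redexes_upto d t - {p})"
    using redexes_upto_rstep[OF rstep_min_step[OF False] pat fin] by (simp add: p_def)
  show ?thesis
  proof (cases "length p \<le> d")
    case True
    then have "p \<in> redexes_upto d t"
      using min_redex_minimal(1)[OF False] by (simp add: redexes_upto_def p_def)
    then show ?thesis
      using step fin by (simp add: card_Diff_singleton)
  next
    case False
    then have "redexes_upto d t = {}"
      using min_redex_minimal(2)[OF \<open>\<not> no_rule_sym t\<close>] by (fastforce simp: redexes_upto_def p_def)
    then show ?thesis
      using step by simp
  qed
qed

lemma eq_upto_min_step: "redexes_upto d t = {} \<Longrightarrow> eq_upto d t (min_step side t)"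
proof (cases "no_rule_sym t")
  case False
  assume "redexes_upto d t = {}"
  then have "d < length (min_redex t)"
    using min_redex_minimal(1)[OF False] by (force simp: redexes_upto_def not_less)
  then show ?thesis
    by (rule rstep_eq_upto[OF rstep_min_step[OF False]])
qed (simp add: min_step_no_rule_sym)

lemma redexes_upto_min_step_iterate:
  assumes "linear_patterns side" and "wf_tree ar \<psi>" and "card (redexes_upto d \<psi>) \<le> i"
  shows "redexes_upto d ((min_step side ^^ i) \<psi>) = {}"
proof -
  have "finite (redexes_upto d ((min_step side ^^ i) \<psi>))
      \<and> card (redexes_upto d ((min_step side ^^ i) \<psi>)) \<le> card (redexes_upto d \<psi>) - i" for i
  proof (induction i)
    case 0
    then show ?case
      using finite_redexes_upto[OF assms(2)] by simp
  next
    case (Suc i)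
    then show ?case
      using redexes_upto_min_step[OF assms(1), of d "(min_step side ^^ i) \<psi>"] by auto
  qed
  then show ?thesis
    using assms(3) by (metis card_0_eq diff_is_0_eq le_zero_eq)
qed

lemma rtranclp_rstep_min_step_iterate:
  "(\<lambda>a b. \<exists>p. rstep side a b p)\<^sup>*\<^sup>* \<psi> ((min_step side ^^ i) \<psi>)"
proof (induction i)
  case (Suc i)
  show ?case
  proof (cases "no_rule_sym ((min_step side ^^ i) \<psi>)")
    case True
    then show ?thesis
      using Suc by (simp add: min_step_no_rule_sym)
  next
    case False
    then show ?thesis
      using Suc rstep_min_step[OF False, of side] by (auto intro: rtranclp.rtrancl_into_rtrancl)
  qed
qed simp

lemma scred_min_step_iterate_limit:
  assumes pat: "linear_patterns side" and wf: "wf_tree ar \<psi>"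
    and redex: "\<And>i. \<not> no_rule_sym ((min_step side ^^ i) \<psi>)"
  shows "\<exists>u. scred side \<psi> u \<and> no_rule_sym u"
proof -
  define ts where "ts i = (min_step side ^^ i) \<psi>" for i
  have vanish: "redexes_upto d (ts i) = {}" if "card (redexes_upto d \<psi>) \<le> i" for d i
    unfolding ts_def using redexes_upto_min_step_iterate[OF pat wf that] .
  have steps: "\<forall>i. rstep side (ts i) (ts (Suc i)) (min_redex (ts i))"
    using rstep_min_step[OF redex] by (simp add: ts_def)
  have "\<forall>k. \<exists>N. \<forall>i\<ge>N. eq_upto k (ts i) (ts (Suc i))"
    using vanish eq_upto_min_step by (metis ts_def funpow.simps(2) comp_apply)
  then obtain u where conv: "\<forall>k. \<exists>N. \<forall>i\<ge>N. eq_upto k (ts i) u"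
    by (rule eq_upto_Suc_imp_convergent)
  have "filterlim (\<lambda>i. length (min_redex (ts i))) at_top sequentially"
    unfolding filterlim_at_top eventually_sequentially
  proof
    fix Z
    have "Z \<le> length (min_redex (ts i))" if "card (redexes_upto Z \<psi>) \<le> i" for i
    proof -
      obtain \<mu> where "ts i (min_redex (ts i)) = Some (R \<mu>)"
        using min_redex_minimal(1) redex unfolding ts_def by blast
      then show ?thesis
        using vanish[OF that] by (force simp: redexes_upto_def)
    qed
    then show "\<exists>N. \<forall>i\<ge>N. Z \<le> length (min_redex (ts i))"
      by blast
  qed
  moreover have "(\<lambda>i. tdist (ts i) u) \<longlonglongrightarrow> 0"
    using conv by (simp add: tdist_tendsto_0_iff)
  moreover have "no_rule_sym u"
    unfolding no_rule_sym_def
  proof (intro allI)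
    fix q :: "nat list" and \<mu>
    obtain N where "\<forall>i\<ge>N. eq_upto (length q) (ts i) u"
      using conv by blast
    then have "ts (max N (card (redexes_upto (length q) \<psi>))) q = u q"
      by (simp add: eq_upto_def)
    then show "u q \<noteq> Some (R \<mu>)"
      using vanish[of "length q" "max N (card (redexes_upto (length q) \<psi>))"]
      by (auto simp: redexes_upto_def)
  qed
  ultimately show ?thesis
    unfolding scred_def using steps by (metis ts_def funpow_0)
qed

lemma normal_form_exists:
  assumes "linear_patterns side" and "wf_tree ar \<psi>"
  shows "\<exists>u. scred side \<psi> u \<and> no_rule_sym u"
proof (cases "\<exists>i. no_rule_sym ((min_step side ^^ i) \<psi>)")
  case True
  then show ?thesis
    using rtranclp_rstep_min_step_iterate unfolding scred_def by blast
next
  case False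
  then show ?thesis
    using scred_min_step_iterate_limit[OF assms] by blast
qed

section \<open>Convergent proof terms\<close>

lemma nform_Some_iff: "nform side \<psi> = Some u \<longleftrightarrow> scred side \<psi> u \<and> no_rule_sym u"
proof
  assume nf: "nform side \<psi> = Some u"
  then obtain v where "scred side \<psi> v" and "no_rule_sym v"
    by (auto simp: nform_def split: if_splits)
  moreover from this have "v = u"
    using nf nform_eqI by fastforce
  ultimately show "scred side \<psi> u \<and> no_rule_sym u"
    by simp
qed (simp add: nform_eqI)

lemma nform_rule_free:
  assumes "nform side \<psi> = Some u" and "rule_free \<psi> q"
  shows "u q = \<psi> q"
proof -
  have "u q = Some a \<longleftrightarrow> \<psi> q = Some a" for a
    using assms nf_sym_scred[of side \<psi> u q a] nf_sym_rule_free[of \<psi> q side a]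
    by (simp add: nform_Some_iff)
  then show ?thesis
    by (metis option.exhaust)
qed

lemma rule_free_below_mind: "enat n < ms_mind \<psi> \<Longrightarrow> length q \<le> n \<Longrightarrow> rule_free \<psi> q"
proof (unfold rule_free_def, intro allI impI notI)
  fix k \<mu>
  assume n: "enat n < ms_mind \<psi>" and q: "length q \<le> n" and k: "k \<le> length q"
    and R: "\<psi> (take k q) = Some (R \<mu>)"
  have "(LEAST n. \<exists>p \<mu>. length p = n \<and> \<psi> p = Some (R \<mu>)) \<le> length (take k q)"
    using R by (intro Least_le) blast
  also have "\<dots> \<le> n"
    using k q by simp
  finally have "(LEAST n. \<exists>p \<mu>. length p = n \<and> \<psi> p = Some (R \<mu>)) \<le> n" .
  moreover have "\<exists>p \<mu>. \<psi> p = Some (R \<mu>)"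
    using R by blast
  ultimately show False
    using n by (simp add: ms_mind_def)
qed

lemma multistep_eq_upto:
  assumes wf: "wf_trs T" and ms: "is_multistep T \<psi>" and tgt: "nform (rl_rhs T) \<psi> = Some u"
    and n: "enat n < ms_mind \<psi>"
  shows "eq_upto n (the (nform (rl_lhs T) \<psi>)) u"
proof -
  have "linear_patterns (rl_lhs T)"
    using wf by (simp add: wf_trs_def linear_patterns_def)
  moreover have "wf_tree (psym_ar T) \<psi>"
    using ms by (simp add: is_multistep_def)
  ultimately obtain v where "nform (rl_lhs T) \<psi> = Some v"
    using normal_form_exists nform_eqI by metis
  with tgt show ?thesis
    using rule_free_below_mind[OF n] by (simp add: eq_upto_def nform_rule_free)
qed

lemma limit_option_eq:
  assumes "(\<lambda>i. tdist (x i) u) \<longlonglongrightarrow> 0"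
  shows "(if \<exists>u. (\<lambda>i. tdist (x i) u) \<longlonglongrightarrow> 0 then Some (THE u. (\<lambda>i. tdist (x i) u) \<longlonglongrightarrow> 0) else None)
    = Some u"
proof -
  have "(THE u. (\<lambda>i. tdist (x i) u) \<longlonglongrightarrow> 0) = u"
    using assms tdist_tendsto_0_unique[OF _ assms] by (rule the_equality)
  then show ?thesis
    using assms by auto
qed

lemma infprod_limit:
  assumes step: "\<And>i n. enat n < m i \<Longrightarrow> eq_upto n (s i) (s (Suc i))"
    and conv: "\<forall>k::nat. \<exists>n. \<forall>j>n. enat k < m j"
  obtains u where "(\<lambda>i. tdist (s (Suc i)) u) \<longlonglongrightarrow> 0"
    and "\<And>n. enat n < (INF i. m i) \<Longrightarrow> eq_upto n (s 0) u"
proof -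
  have "\<exists>N. \<forall>i\<ge>N. eq_upto k (s i) (s (Suc i))" for k
  proof -
    obtain n where "\<forall>j>n. enat k < m j"
      using conv by blast
    then show ?thesis
      using step by (intro exI[of _ "Suc n"]) simp
  qed
  then obtain u where u: "\<forall>k. \<exists>N. \<forall>i\<ge>N. eq_upto k (s i) u"
    using eq_upto_Suc_imp_convergent by blast
  have "\<exists>N. \<forall>i\<ge>N. eq_upto k (s (Suc i)) u" for k
  proof -
    obtain N where "\<forall>i\<ge>N. eq_upto k (s i) u"
      using u by blast
    then show ?thesis
      by (intro exI[of _ N]) simp
  qed
  then have "(\<lambda>i. tdist (s (Suc i)) u) \<longlonglongrightarrow> 0"
    by (simp add: tdist_tendsto_0_iff)
  moreover have "eq_upto n (s 0) u" if n: "enat n < (INF i. m i)" for n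
  proof -
    have "enat n < m i" for i
      using n INF_lower[of i UNIV m] by (meson UNIV_I less_le_trans)
    then have "eq_upto n (s 0) (s i)" for i
      using eq_upto_chain[of 0 i n s] step by blast
    moreover obtain N where "eq_upto n (s N) u"
      using u by blast
    ultimately show ?thesis
      by (rule eq_upto_trans)
  qed
  ultimately show ?thesis
    using that by blast
qed

lemma eq_upto_Suc_node:
  assumes "length ss = length ts" and "\<And>i. i < length ss \<Longrightarrow> eq_upto n (ss ! i) (ts ! i)"
  shows "eq_upto (Suc n) (node a ss) (node a ts)"
  unfolding eq_upto_def
proof (intro allI impI)
  fix q :: "nat list"
  assume "length q \<le> Suc n"
  then show "node a ss q = node a ts q"
    using assms by (cases q) (auto simp: node_def eq_upto_def)
qed

lemma enat_less_one_plus_INF: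
  assumes "enat (Suc n) < 1 + (INF i \<in> A. f i)" and "i \<in> A"
  shows "enat n < f i"
proof -
  have "enat n < (INF i \<in> A. f i)"
    using assms(1) by (cases "INF i \<in> A. f i") (auto simp: one_enat_def)
  then show ?thesis
    using INF_lower[OF assms(2), of f] by (meson less_le_trans)
qed

lemma PT_convergent_tgt:
  assumes "PT T \<psi> s t c m" and "wf_trs T" and c
  shows "t \<noteq> None \<and> (\<forall>n. enat n < m \<longrightarrow> eq_upto n s (the t))"
  using assms
proof (induction rule: PT.induct)
  case (multistep \<psi>)
  then show ?case
    using multistep_eq_upto by fastforce
next
  case (comp \<psi>1 s1 t1 m1 \<psi>2 t2 c2 m2)
  then show ?case
    by (auto intro: eq_upto_trans)
next
  case (infprod \<psi> s m)
  then have "enat n < m i \<Longrightarrow> eq_upto n (s i) (s (Suc i))" for n i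
    by simp
  then obtain u where "(\<lambda>i. tdist (s (Suc i)) u) \<longlonglongrightarrow> 0"
    and "\<And>n. enat n < (INF i. m i) \<Longrightarrow> eq_upto n (s 0) u"
    using infprod_limit infprod.prems(2) by metis
  then show ?case
    by (simp add: limit_option_eq)
next
  case (func \<psi>s f ss ts cs ms)
  then have IH: "ts ! i \<noteq> None" "enat n < ms ! i \<Longrightarrow> eq_upto n (ss ! i) (the (ts ! i))"
    if "i < length \<psi>s" for i n
    using that by auto
  have "eq_upto n (node (F f) ss) (node (F f) (map the ts))"
    if n: "enat n < 1 + (INF i \<in> {..<length ms}. ms ! i)" for n
  proof (cases n)
    case (Suc n')
    have "enat n' < ms ! i" if "i < length \<psi>s" for i
      using enat_less_one_plus_INF[where A = "{..<length ms}"] n Suc that func.hyps by simp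
    then show ?thesis
      unfolding Suc using IH(2) func.hyps by (intro eq_upto_Suc_node) auto
  qed (simp add: eq_upto_def node_def)
  then show ?case
    using IH(1) func.hyps by simp
next
  case (rule \<psi>s \<mu> ss ts cs ms)
  have "tvars (rl_rhs T \<mu>) \<subseteq> {..<length \<psi>s}"
    using rule.prems(1) rule.hyps(1) unfolding wf_trs_def by metis
  then have "\<forall>j\<in>tvars (rl_rhs T \<mu>). ts ! j \<noteq> None"
    using rule.IH rule.prems rule.hyps by auto
  then show ?case
    by (simp add: inst_opt_def)
qed

theorem mainTheorem9:
  fixes T :: "('f, 'r) trs" and \<psi> :: "('f, 'r) psym tree"
  assumes "wf_trs T"
    and "PT T \<psi> s t True m"
  shows "t \<noteq> None \<and> (\<forall>n::nat. enat n < m \<longrightarrow> tdist s (the t) < (1/2) ^ n)"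
  using PT_convergent_tgt[OF assms(2,1)] by (simp add: tdist_less_iff_eq_upto)

end
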